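(* Fix $n\ge1$ and $\mathbf a_n=(a_1,\dots,a_n)\in\mathcal A_n$. The function $F_{\mathbf a_n}:\bar\nabla\to\mathbb R$ is continuous on $\bar\nabla$ (with the subspace topology of $\mathbb R^\infty$) if and only if $a_1=0$.
   Context: $\bar\nabla=\{(p_1,p_2,\dots):p_1\ge p_2\ge\dots\ge0,\ \sum_k p_k\le1\}$ with the subspace topology of the product space $\mathbb R^\infty$. $\mathcal A_n=\{(a_1,\dots,a_n):a_k\in\mathbb Z_{\ge0},\ \sum_{i=1}^n ia_i=n\}$. For $\mathbf p\in\bar\nabla$, $$F_{\mathbf a_n}(\mathbf p)=C(n,\mathbf a_n)\sum\prod_{i=1}^n\prod_{j=1}^{a_i}p_{l_{ij}}^{\,i},\qquad C(n,\mathbf a_n)=\frac{n!}{\prod_{j=1}^n (j!)^{a_j}a_j!},$$ where the sum is over all families of positive integers $l_{ij}$ ($1\le i\le n$, $1\le j\le a_i$) that are pairwise distinct and satisfy $l_{i1}<\dots<l_{ia_i}$ for each $i$ (this is the probability of sample configuration $\mathbf a_n$ given allele frequencies $\mathbf p$, extended directly to $\bar\nabla$). *)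

theory Defs
  imports "HOL-Analysis.Analysis"
begin

text \<open>Sequences (p_1, p_2, ...) are represented as p :: nat => real, re-indexed from 0
  (p 0 stands for p_1). The type nat => real carries the product topology
  (HOL-Analysis Function_Topology), i.e. the topology of R^infinity.\<close>

definition nabla_bar :: "(nat \<Rightarrow> real) set" where
  "nabla_bar = {p. (\<forall>k. p k \<ge> p (Suc k)) \<and> (\<forall>k. p k \<ge> 0) \<and> summable p \<and> suminf p \<le> 1}"

definition idx :: "nat \<Rightarrow> (nat \<Rightarrow> nat) \<Rightarrow> (nat \<times> nat) set" where
  "idx n a = {(i, j). 1 \<le> i \<and> i \<le> n \<and> 1 \<le> j \<and> j \<le> a i}"

definition labelings :: "nat \<Rightarrow> (nat \<Rightarrow> nat) \<Rightarrow> (nat \<times> nat \<Rightarrow> nat) set" where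
  "labelings n a = {l. l \<in> idx n a \<rightarrow>\<^sub>E (UNIV :: nat set) \<and> inj_on l (idx n a) \<and>
      (\<forall>i j. (i, j) \<in> idx n a \<and> (i, Suc j) \<in> idx n a \<longrightarrow> l (i, j) < l (i, Suc j))}"

definition Ccoef :: "nat \<Rightarrow> (nat \<Rightarrow> nat) \<Rightarrow> real" where
  "Ccoef n a = fact n / (\<Prod>j=1..n. (fact j) ^ (a j) * fact (a j))"

definition F :: "nat \<Rightarrow> (nat \<Rightarrow> nat) \<Rightarrow> (nat \<Rightarrow> real) \<Rightarrow> real" where
  "F n a p = Ccoef n a *
     infsum (\<lambda>l. \<Prod>(i, j)\<in>idx n a. p (l (i, j)) ^ i) (labelings n a)"

end

theory Submission
  imports Defs
begin

text \<open>If \<open>a\<^sub>1 = 0\<close>, every block has size at least 2, and a label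
  \<open>k \<ge> N\<close> contributes a factor \<open>p\<^sub>k\<^sup>i \<le> p\<^sub>k p\<^sub>N \<le> p\<^sub>k / (N + 1)\<close>; so the truncations of
  the sum to labels below \<open>N\<close>, continuous functions of finitely many coordinates, converge
  to \<open>F\<close> uniformly on \<open>nabla_bar\<close>.

  If \<open>a\<^sub>1 > 0\<close>, let \<open>r\<close> be the number of positions in blocks of size at least 2, put mass
  \<open>c = 1/(r+1)\<close> on each of the first \<open>r\<close> coordinates, and spread a further mass \<open>c\<close> evenly
  over the next \<open>a\<^sub>1 M\<close> coordinates. As \<open>M \<rightarrow> \<infinity>\<close> these points converge coordinatewise to
  the point carrying only the \<open>r\<close> masses \<open>c\<close>, where \<open>F\<close> vanishes because a labeling needs
  \<open>r + a\<^sub>1\<close> distinct labels. Yet the \<open>M\<^sup>a\<^sup>1\<close> labelings that send the \<open>j\<close>-th singleton into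
  the \<open>j\<close>-th window of \<open>M\<close> spread coordinates keep \<open>F\<close> above a positive constant.\<close>

lemma sum_prod_le_prod_sum_PiE:
  fixes p :: "'b \<Rightarrow> real"
  assumes "\<And>k. 0 \<le> p k" and "finite I" and "\<And>x. x \<in> I \<Longrightarrow> finite (B x)" and "S \<subseteq> PiE I B"
  shows "(\<Sum>l\<in>S. \<Prod>x\<in>I. p (l x) ^ e x) \<le> (\<Prod>x\<in>I. \<Sum>k\<in>B x. p k ^ e x)"
proof -
  have "(\<Sum>l\<in>S. \<Prod>x\<in>I. p (l x) ^ e x) \<le> (\<Sum>l\<in>PiE I B. \<Prod>x\<in>I. p (l x) ^ e x)"
    using assms by (intro sum_mono2 finite_PiE) (auto intro!: prod_nonneg)
  also have "\<dots> = (\<Prod>x\<in>I. \<Sum>k\<in>B x. p k ^ e x)"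
    using assms by (subst prod_sum_PiE) auto
  finally show ?thesis .
qed

lemma finite_subset_PiE_lessThan:
  assumes "finite I" and "finite S" and "S \<subseteq> I \<rightarrow>\<^sub>E (UNIV :: nat set)"
  obtains M where "S \<subseteq> I \<rightarrow>\<^sub>E {..<M}"
proof
  let ?V = "\<Union>l\<in>S. l ` I"
  have "finite ?V"
    using assms by simp
  then have "l x < Suc (Max ?V)" if "l \<in> S" "x \<in> I" for l x
    using that by (intro le_imp_less_Suc Max_ge) auto
  then show "S \<subseteq> I \<rightarrow>\<^sub>E {..<Suc (Max ?V)}"
    using assms(3) by (auto simp: PiE_iff)
qed

lemma tendsto_fun_componentwise:
  fixes f :: "'b \<Rightarrow> 'i \<Rightarrow> 'c::topological_space"
  assumes "\<And>k. ((\<lambda>m. f m k) \<longlongrightarrow> g k) net"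
  shows "(f \<longlongrightarrow> g) net"
  using assms limitin_componentwise[of "\<lambda>_. euclidean" UNIV f g net]
  by (simp add: euclidean_product_topology)

lemma mult_add_less_mult_add:
  fixes b M :: nat
  assumes "b < M" and "j < j'"
  shows "j * M + b < j' * M + b'"
proof -
  have "j * M + b < Suc j * M"
    using assms(1) by simp
  also have "\<dots> \<le> j' * M"
    using assms(2) by (intro mult_right_mono) auto
  finally show ?thesis
    by simp
qed

lemma nabla_bar_nonneg: "p \<in> nabla_bar \<Longrightarrow> 0 \<le> p k"
  by (simp add: nabla_bar_def)

lemma nabla_bar_sum_le_1:
  assumes "p \<in> nabla_bar" and "finite A"
  shows "sum p A \<le> 1"
proof -
  have "sum p A \<le> suminf p"
    using assms by (intro sum_le_suminf) (auto simp: nabla_bar_def)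
  also have "\<dots> \<le> 1"
    using assms by (simp add: nabla_bar_def)
  finally show ?thesis .
qed

lemma nabla_bar_le_1: "p \<in> nabla_bar \<Longrightarrow> p k \<le> 1"
  using nabla_bar_sum_le_1[of p "{k}"] by simp

lemma nabla_bar_antimono: "p \<in> nabla_bar \<Longrightarrow> k \<le> k' \<Longrightarrow> p k' \<le> p k"
  by (rule lift_Suc_antimono_le[of p]) (auto simp: nabla_bar_def)

lemma nabla_bar_le_inverse_Suc:
  assumes p: "p \<in> nabla_bar"
  shows "p N \<le> 1 / real (Suc N)"
proof -
  have "real (Suc N) * p N = (\<Sum>k<Suc N. p N)"
    by simp
  also have "\<dots> \<le> (\<Sum>k<Suc N. p k)"
    by (intro sum_mono nabla_bar_antimono[OF p]) auto
  also have "\<dots> \<le> 1"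
    by (rule nabla_bar_sum_le_1[OF p]) simp
  finally show ?thesis
    by (simp add: field_simps)
qed

lemma nabla_bar_sum_power_le_1:
  assumes p: "p \<in> nabla_bar" and "finite A" and "1 \<le> i"
  shows "(\<Sum>k\<in>A. p k ^ i) \<le> 1"
proof -
  have "(\<Sum>k\<in>A. p k ^ i) \<le> sum p A"
    using power_decreasing[OF \<open>1 \<le> i\<close> nabla_bar_nonneg[OF p] nabla_bar_le_1[OF p]]
    by (intro sum_mono) simp
  also have "\<dots> \<le> 1"
    by (rule nabla_bar_sum_le_1[OF p \<open>finite A\<close>])
  finally show ?thesis .
qed

lemma nabla_bar_tail_sum_power_le:
  assumes p: "p \<in> nabla_bar" and "finite A" and "A \<subseteq> {N..}" and "2 \<le> i"
  shows "(\<Sum>k\<in>A. p k ^ i) \<le> 1 / real (Suc N)"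
proof -
  have "(\<Sum>k\<in>A. p k ^ i) \<le> (\<Sum>k\<in>A. p k * p N)"
  proof (rule sum_mono)
    fix k assume "k \<in> A"
    have "p k ^ i \<le> p k ^ 2"
      by (rule power_decreasing[OF \<open>2 \<le> i\<close> nabla_bar_nonneg[OF p] nabla_bar_le_1[OF p]])
    also have "\<dots> \<le> p k * p N"
      using \<open>k \<in> A\<close> \<open>A \<subseteq> {N..}\<close>
      by (auto simp: power2_eq_square intro!: mult_left_mono nabla_bar_antimono[OF p] nabla_bar_nonneg[OF p])
    finally show "p k ^ i \<le> p k * p N" .
  qed
  also have "\<dots> = sum p A * p N"
    by (simp add: sum_distrib_right)
  also have "\<dots> \<le> p N"
    using mult_right_mono[OF nabla_bar_sum_le_1[OF p \<open>finite A\<close>] nabla_bar_nonneg[OF p]] by simp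
  also have "\<dots> \<le> 1 / real (Suc N)"
    by (rule nabla_bar_le_inverse_Suc[OF p])
  finally show ?thesis .
qed

lemma nabla_barI:
  fixes p :: "nat \<Rightarrow> real"
  assumes "\<And>k. p (Suc k) \<le> p k" and "\<And>k. 0 \<le> p k" and "\<And>k. R \<le> k \<Longrightarrow> p k = 0"
    and "sum p {..<R} \<le> 1"
  shows "p \<in> nabla_bar"
proof -
  have "p sums sum p {..<R}"
    by (rule sums_finite) (use assms(3) in auto)
  then show ?thesis
    using assms unfolding nabla_bar_def by (auto simp: sums_iff)
qed

definition label_weight :: "nat \<Rightarrow> (nat \<Rightarrow> nat) \<Rightarrow> (nat \<Rightarrow> real) \<Rightarrow> (nat \<times> nat \<Rightarrow> nat) \<Rightarrow> real" where
  "label_weight n a p l = (\<Prod>x\<in>idx n a. p (l x) ^ fst x)"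

lemma F_eq_infsum_label_weight:
  "F n a p = Ccoef n a * infsum (label_weight n a p) (labelings n a)"
  by (simp add: F_def label_weight_def[abs_def] case_prod_unfold)

lemma Ccoef_pos: "0 < Ccoef n a"
  by (auto simp: Ccoef_def intro!: divide_pos_pos prod_pos mult_pos_pos)

lemma idx_eq_Sigma: "idx n a = Sigma {1..n} (\<lambda>i. {1..a i})"
  by (auto simp: idx_def)

lemma finite_idx [simp]: "finite (idx n a)"
  by (simp add: idx_eq_Sigma)

lemma idx_fst_ge_1: "x \<in> idx n a \<Longrightarrow> 1 \<le> fst x"
  by (auto simp: idx_def)

lemma labelings_subset_PiE: "labelings n a \<subseteq> idx n a \<rightarrow>\<^sub>E UNIV"
  by (auto simp: labelings_def)

lemma label_weight_nonneg: "(\<And>k. 0 \<le> p k) \<Longrightarrow> 0 \<le> label_weight n a p l"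
  by (simp add: label_weight_def prod_nonneg)

lemma labelings_finite_subset_PiE_lessThan:
  assumes "finite S" and "S \<subseteq> labelings n a"
  obtains M where "S \<subseteq> idx n a \<rightarrow>\<^sub>E {..<M}"
  using finite_subset_PiE_lessThan[OF finite_idx assms(1)] assms(2) labelings_subset_PiE by blast

lemma sum_label_weight_le_1:
  assumes p: "p \<in> nabla_bar" and "finite S" and "S \<subseteq> labelings n a"
  shows "sum (label_weight n a p) S \<le> 1"
proof -
  obtain M where M: "S \<subseteq> idx n a \<rightarrow>\<^sub>E {..<M}"
    using labelings_finite_subset_PiE_lessThan[OF assms(2,3)] .
  have "sum (label_weight n a p) S \<le> (\<Prod>x\<in>idx n a. \<Sum>k<M. p k ^ fst x)"
    unfolding label_weight_def by (rule sum_prod_le_prod_sum_PiE[OF nabla_bar_nonneg[OF p] _ _ M]) auto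
  also have "\<dots> \<le> 1"
    by (intro prod_le_1 conjI sum_nonneg zero_le_power nabla_bar_nonneg[OF p]
        nabla_bar_sum_power_le_1[OF p] idx_fst_ge_1) auto
  finally show ?thesis .
qed

lemma label_weight_summable_on:
  assumes "p \<in> nabla_bar"
  shows "label_weight n a p summable_on labelings n a"
  using assms
  by (intro nonneg_bdd_above_summable_on bdd_aboveI2[where M = 1])
     (auto intro: label_weight_nonneg nabla_bar_nonneg sum_label_weight_le_1)

lemma sum_label_weight_label_ge_le:
  assumes p: "p \<in> nabla_bar" and x: "x \<in> idx n a" "2 \<le> fst x"
    and S: "finite S" "S \<subseteq> labelings n a" "\<forall>l\<in>S. N \<le> l x"
  shows "sum (label_weight n a p) S \<le> 1 / real (Suc N)"
proof -
  let ?I = "idx n a"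
  obtain M where M: "S \<subseteq> ?I \<rightarrow>\<^sub>E {..<M}"
    using labelings_finite_subset_PiE_lessThan[OF S(1,2)] .
  define B where "B y = (if y = x then {N..<M} else {..<M})" for y
  have S_B: "S \<subseteq> PiE ?I B"
    using M S(3) by (force simp: B_def PiE_iff)
  have "sum (label_weight n a p) S \<le> (\<Prod>y\<in>?I. \<Sum>k\<in>B y. p k ^ fst y)"
    unfolding label_weight_def
    by (rule sum_prod_le_prod_sum_PiE[OF nabla_bar_nonneg[OF p] finite_idx _ S_B]) (simp add: B_def)
  also have "\<dots> = (\<Sum>k\<in>{N..<M}. p k ^ fst x) * (\<Prod>y\<in>?I - {x}. \<Sum>k<M. p k ^ fst y)"
    using x by (simp add: prod.remove B_def)
  also have "\<dots> \<le> 1 / real (Suc N) * 1"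
    using x
    by (intro mult_mono nabla_bar_tail_sum_power_le[OF p] prod_le_1 prod_nonneg conjI sum_nonneg zero_le_power
        nabla_bar_nonneg[OF p] nabla_bar_sum_power_le_1[OF p])
       (auto dest: idx_fst_ge_1)
  finally show ?thesis
    by simp
qed

lemma infsum_label_weight_tail_le:
  assumes p: "p \<in> nabla_bar" and a1: "a 1 = 0"
  shows "infsum (label_weight n a p) {l \<in> labelings n a. \<exists>x\<in>idx n a. N \<le> l x}
    \<le> real (card (idx n a)) / real (Suc N)"
proof (rule infsum_le_finite_sums)
  let ?I = "idx n a" and ?w = "label_weight n a p"
  show "?w summable_on {l \<in> labelings n a. \<exists>x\<in>?I. N \<le> l x}"
    by (rule summable_on_subset_banach[OF label_weight_summable_on[OF p]]) auto
  fix S assume S: "finite S" "S \<subseteq> {l \<in> labelings n a. \<exists>x\<in>?I. N \<le> l x}"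
  have "sum ?w S \<le> (\<Sum>l\<in>S. \<Sum>x\<in>?I. if N \<le> l x then ?w l else 0)"
  proof (rule sum_mono)
    fix l assume "l \<in> S"
    then obtain x where "x \<in> ?I" "N \<le> l x"
      using S(2) by blast
    then show "?w l \<le> (\<Sum>x\<in>?I. if N \<le> l x then ?w l else 0)"
      using member_le_sum[of x ?I "\<lambda>x. if N \<le> l x then ?w l else 0"]
      by (simp add: label_weight_nonneg nabla_bar_nonneg[OF p])
  qed
  also have "\<dots> = (\<Sum>x\<in>?I. sum ?w {l\<in>S. N \<le> l x})"
    by (subst sum.swap) (simp add: sum.inter_filter[OF S(1)])
  also have "\<dots> \<le> (\<Sum>x\<in>?I. 1 / real (Suc N))"
  proof (rule sum_mono)
    fix x assume x: "x \<in> ?I"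
    with a1 have "2 \<le> fst x"
      by (cases "fst x = 1") (auto simp: idx_def)
    with x S show "sum ?w {l\<in>S. N \<le> l x} \<le> 1 / real (Suc N)"
      by (intro sum_label_weight_label_ge_le[OF p]) auto
  qed
  finally show "sum ?w S \<le> real (card ?I) / real (Suc N)"
    by simp
qed

definition bounded_labelings :: "nat \<Rightarrow> (nat \<Rightarrow> nat) \<Rightarrow> nat \<Rightarrow> (nat \<times> nat \<Rightarrow> nat) set" where
  "bounded_labelings n a N = {l \<in> labelings n a. \<forall>x\<in>idx n a. l x < N}"

definition F_trunc :: "nat \<Rightarrow> (nat \<Rightarrow> nat) \<Rightarrow> nat \<Rightarrow> (nat \<Rightarrow> real) \<Rightarrow> real" where
  "F_trunc n a N p = Ccoef n a * sum (label_weight n a p) (bounded_labelings n a N)"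

lemma finite_bounded_labelings: "finite (bounded_labelings n a N)"
  by (rule finite_subset[of _ "idx n a \<rightarrow>\<^sub>E {..<N}"])
     (auto simp: bounded_labelings_def PiE_iff labelings_def extensional_def intro!: finite_PiE)

lemma continuous_on_F_trunc: "continuous_on S (F_trunc n a N)"
  unfolding F_trunc_def label_weight_def
  by (intro continuous_intros continuous_on_subset[OF continuous_on_product_coordinates]) auto

lemma dist_F_trunc_le:
  assumes p: "p \<in> nabla_bar" and a1: "a 1 = 0"
  shows "dist (F_trunc n a N p) (F n a p) \<le> Ccoef n a * real (card (idx n a)) / real (Suc N)"
proof -
  let ?L = "labelings n a" and ?C = "Ccoef n a" and ?B = "bounded_labelings n a N"
    and ?w = "label_weight n a p" and ?T = "{l \<in> labelings n a. \<exists>x\<in>idx n a. N \<le> l x}"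
  have C: "0 \<le> ?C"
    by (rule less_imp_le[OF Ccoef_pos])
  have summable: "?w summable_on A" if "A \<subseteq> ?L" for A
    by (rule summable_on_subset_banach[OF label_weight_summable_on[OF p] that])
  have "?B \<union> ?T = ?L" "?B \<inter> ?T = {}"
    by (auto simp: bounded_labelings_def not_less)
  then have "infsum ?w ?L = sum ?w ?B + infsum ?w ?T"
    using infsum_Un_disjoint[OF summable summable, of ?B ?T] finite_bounded_labelings
    by (simp add: bounded_labelings_def)
  then have "F n a p - F_trunc n a N p = ?C * infsum ?w ?T"
    by (simp add: F_eq_infsum_label_weight F_trunc_def algebra_simps)
  moreover have "0 \<le> ?C * infsum ?w ?T"
    by (intro mult_nonneg_nonneg C infsum_nonneg label_weight_nonneg nabla_bar_nonneg[OF p])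
  ultimately have "dist (F_trunc n a N p) (F n a p) = ?C * infsum ?w ?T"
    by (simp add: dist_real_def abs_minus_commute[of "F_trunc n a N p"])
  also have "\<dots> \<le> ?C * (real (card (idx n a)) / real (Suc N))"
    by (rule mult_left_mono[OF infsum_label_weight_tail_le[where a = a, OF p a1] C])
  finally show ?thesis
    by simp
qed

lemma F_continuous_on:
  assumes "a 1 = 0"
  shows "continuous_on nabla_bar (F n a)"
proof (rule uniform_limit_theorem)
  let ?K = "Ccoef n a * real (card (idx n a))"
  show "uniform_limit nabla_bar (\<lambda>N. F_trunc n a N) (F n a) sequentially"
  proof (rule uniform_limitI)
    fix e :: real assume "0 < e"
    have "(\<lambda>N. ?K / real (Suc N)) \<longlonglongrightarrow> 0"
      using LIMSEQ_Suc[OF lim_const_over_n[of ?K]] by simp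
    then have "\<forall>\<^sub>F N in sequentially. ?K / real (Suc N) < e"
      using \<open>0 < e\<close> by (rule order_tendstoD)
    then show "\<forall>\<^sub>F N in sequentially. \<forall>p\<in>nabla_bar. dist (F_trunc n a N p) (F n a p) < e"
      by eventually_elim (auto intro: le_less_trans[OF dist_F_trunc_le[where a = a, OF _ assms]])
  qed
qed (auto intro: always_eventually continuous_on_F_trunc)

definition block_offset :: "(nat \<Rightarrow> nat) \<Rightarrow> nat \<Rightarrow> nat" where
  "block_offset a i = (\<Sum>i'\<in>{2..<i}. a i')"

definition block_enum :: "(nat \<Rightarrow> nat) \<Rightarrow> nat \<times> nat \<Rightarrow> nat" where
  "block_enum a x = block_offset a (fst x) + (snd x - 1)"

abbreviation nonsingletons :: "nat \<Rightarrow> (nat \<Rightarrow> nat) \<Rightarrow> nat" where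
  "nonsingletons n a \<equiv> block_offset a (Suc n)"

lemma block_offset_Suc: "2 \<le> i \<Longrightarrow> block_offset a (Suc i) = block_offset a i + a i"
  by (simp add: block_offset_def)

lemma block_offset_mono: "i \<le> i' \<Longrightarrow> block_offset a i \<le> block_offset a i'"
  unfolding block_offset_def by (intro sum_mono2) auto

lemma idx_fst_ge_2: "x \<in> idx n a \<Longrightarrow> fst x \<noteq> 1 \<Longrightarrow> 2 \<le> fst x"
  by (auto simp: idx_def)

lemma block_enum_less_block_offset:
  "x \<in> idx n a \<Longrightarrow> 2 \<le> fst x \<Longrightarrow> block_enum a x < block_offset a (Suc (fst x))"
  by (auto simp: idx_def block_enum_def block_offset_Suc)

lemma block_enum_less_nonsingletons:
  assumes "x \<in> idx n a" and "2 \<le> fst x"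
  shows "block_enum a x < nonsingletons n a"
  using block_enum_less_block_offset[OF assms] block_offset_mono[of "Suc (fst x)" "Suc n" a] assms(1)
  by (auto simp: idx_def)

lemma inj_on_block_enum: "inj_on (block_enum a) {x \<in> idx n a. 2 \<le> fst x}"
proof -
  have less: False
    if "u \<in> idx n a" "2 \<le> fst u" "fst u < fst v" "block_enum a u = block_enum a v" for u v
  proof -
    have "block_enum a u < block_offset a (Suc (fst u))"
      by (rule block_enum_less_block_offset[OF that(1,2)])
    also have "\<dots> \<le> block_offset a (fst v)"
      using that(3) by (intro block_offset_mono) simp
    also have "\<dots> \<le> block_enum a v"
      by (simp add: block_enum_def)
    finally show False
      using that(4) by simp
  qed
  show ?thesis
  proof (rule inj_onI)
    fix x y assume x: "x \<in> {x \<in> idx n a. 2 \<le> fst x}" and y: "y \<in> {x \<in> idx n a. 2 \<le> fst x}"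
      and eq: "block_enum a x = block_enum a y"
    have "fst x = fst y"
      using less[of x y] less[of y x] x y eq by (cases "fst x" "fst y" rule: linorder_cases) auto
    moreover from this have "snd x = snd y"
      using x y eq by (auto simp: block_enum_def idx_def)
    ultimately show "x = y"
      by (simp add: prod_eq_iff)
  qed
qed

text \<open>The \<open>j\<close>-th singleton block gets a label in the window
  \<open>[r + (j-1)M, r + jM)\<close>, at the position prescribed by \<open>t j < M\<close>; the other blocks are
  enumerated in order below \<open>r = nonsingletons n a\<close>.\<close>
definition spread_labeling :: "nat \<Rightarrow> (nat \<Rightarrow> nat) \<Rightarrow> nat \<Rightarrow> (nat \<Rightarrow> nat) \<Rightarrow> nat \<times> nat \<Rightarrow> nat" where
  "spread_labeling n a M t = restrict (\<lambda>(i, j).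
     if i = 1 then nonsingletons n a + (j - 1) * M + t j else block_enum a (i, j)) (idx n a)"

lemma spread_labeling_singleton:
  "x \<in> idx n a \<Longrightarrow> fst x = 1 \<Longrightarrow>
    spread_labeling n a M t x = nonsingletons n a + (snd x - 1) * M + t (snd x)"
  by (auto simp: spread_labeling_def split: prod.split)

lemma spread_labeling_nonsingleton:
  "x \<in> idx n a \<Longrightarrow> fst x \<noteq> 1 \<Longrightarrow> spread_labeling n a M t x = block_enum a x"
  by (auto simp: spread_labeling_def split: prod.split)

lemma spread_labeling_singleton_less:
  assumes "t \<in> {1..a 1} \<rightarrow>\<^sub>E {..<M}" and "x \<in> idx n a" "y \<in> idx n a"
    and "fst x = 1" "fst y = 1" "snd x < snd y"
  shows "spread_labeling n a M t x < spread_labeling n a M t y"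
  using assms mult_add_less_mult_add[of "t (snd x)" M "snd x - 1" "snd y - 1" "t (snd y)"]
  by (auto simp: spread_labeling_singleton idx_def PiE_iff)

lemma spread_labeling_nonsingleton_less:
  "x \<in> idx n a \<Longrightarrow> fst x \<noteq> 1 \<Longrightarrow> spread_labeling n a M t x < nonsingletons n a"
  using block_enum_less_nonsingletons idx_fst_ge_2 by (simp add: spread_labeling_nonsingleton)

lemma inj_on_spread_labeling_idx:
  assumes t: "t \<in> {1..a 1} \<rightarrow>\<^sub>E {..<M}"
  shows "inj_on (spread_labeling n a M t) (idx n a)"
proof (rule inj_onI)
  let ?s = "spread_labeling n a M t"
  fix x y assume xy: "x \<in> idx n a" "y \<in> idx n a" "?s x = ?s y"
  consider "fst x = 1" "fst y = 1" | "fst x \<noteq> 1" "fst y \<noteq> 1" | "fst x = 1 \<longleftrightarrow> fst y \<noteq> 1"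
    by blast
  then show "x = y"
  proof cases
    case 1
    then have "snd x = snd y"
      using xy spread_labeling_singleton_less[where n = n and a = a and x = x and y = y, OF t] spread_labeling_singleton_less[where n = n and a = a and x = y and y = x, OF t]
      by (cases "snd x" "snd y" rule: linorder_cases) auto
    with 1 show ?thesis
      by (simp add: prod_eq_iff)
  next
    case 2
    then show ?thesis
      using xy by (intro inj_onD[OF inj_on_block_enum]) (auto simp: spread_labeling_nonsingleton idx_fst_ge_2)
  next
    case 3
    then show ?thesis
      using xy spread_labeling_nonsingleton_less[of x n a M t] spread_labeling_nonsingleton_less[of y n a M t]
      by (auto simp: spread_labeling_singleton)
  qed
qed

lemma spread_labeling_in_labelings:
  assumes t: "t \<in> {1..a 1} \<rightarrow>\<^sub>E {..<M}"
  shows "spread_labeling n a M t \<in> labelings n a"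
proof -
  let ?I = "idx n a" and ?s = "spread_labeling n a M t"
  have "?s (i, j) < ?s (i, Suc j)" if "(i, j) \<in> ?I" "(i, Suc j) \<in> ?I" for i j
  proof (cases "i = 1")
    case True
    then show ?thesis
      using that spread_labeling_singleton_less[where n = n and a = a and x = "(i, j)" and y = "(i, Suc j)", OF t] by simp
  next
    case False
    then show ?thesis
      using that by (auto simp: spread_labeling_nonsingleton block_enum_def idx_def)
  qed
  then show ?thesis
    using inj_on_spread_labeling_idx[where n = n and a = a, OF t] by (auto simp: labelings_def spread_labeling_def)
qed

lemma inj_on_spread_labeling:
  assumes "1 \<le> n"
  shows "inj_on (spread_labeling n a M) ({1..a 1} \<rightarrow>\<^sub>E {..<M})"
proof (rule inj_onI)
  fix t t' assume t: "t \<in> {1..a 1} \<rightarrow>\<^sub>E {..<M}" "t' \<in> {1..a 1} \<rightarrow>\<^sub>E {..<M}"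
    and eq: "spread_labeling n a M t = spread_labeling n a M t'"
  show "t = t'"
  proof (rule PiE_ext[OF t])
    fix j assume "j \<in> {1..a 1}"
    then have "(1, j) \<in> idx n a"
      using assms by (auto simp: idx_def)
    then show "t j = t' j"
      using fun_cong[OF eq, of "(1, j)"] spread_labeling_singleton[of "(1, j)" n a M] by simp
  qed
qed

definition unit_mass :: "nat \<Rightarrow> (nat \<Rightarrow> nat) \<Rightarrow> real" where
  "unit_mass n a = 1 / (real (nonsingletons n a) + 1)"

definition concentrated_point :: "nat \<Rightarrow> (nat \<Rightarrow> nat) \<Rightarrow> nat \<Rightarrow> real" where
  "concentrated_point n a k = (if k < nonsingletons n a then unit_mass n a else 0)"

definition spread_point :: "nat \<Rightarrow> (nat \<Rightarrow> nat) \<Rightarrow> nat \<Rightarrow> nat \<Rightarrow> real" where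
  "spread_point n a M k =
     (if k < nonsingletons n a then unit_mass n a
      else if k < nonsingletons n a + a 1 * M then unit_mass n a / (real (a 1) * real M)
      else 0)"

definition spread_bound :: "nat \<Rightarrow> (nat \<Rightarrow> nat) \<Rightarrow> real" where
  "spread_bound n a = Ccoef n a * (unit_mass n a / real (a 1)) ^ a 1
     * (\<Prod>x\<in>idx n a \<inter> - {x. fst x = 1}. unit_mass n a ^ fst x)"

lemma unit_mass_pos: "0 < unit_mass n a"
  by (simp add: unit_mass_def)

lemma spread_bound_pos: "a 1 \<noteq> 0 \<Longrightarrow> 0 < spread_bound n a"
  using unit_mass_pos[of n a] Ccoef_pos[of n a] by (simp add: spread_bound_def prod_pos)

lemma concentrated_point_in_nabla_bar: "concentrated_point n a \<in> nabla_bar"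
proof (rule nabla_barI[where R = "nonsingletons n a"])
  have "sum (concentrated_point n a) {..<nonsingletons n a} = real (nonsingletons n a) * unit_mass n a"
    by (simp add: concentrated_point_def)
  also have "\<dots> \<le> 1"
    by (simp add: unit_mass_def field_simps)
  finally show "sum (concentrated_point n a) {..<nonsingletons n a} \<le> 1" .
qed (use unit_mass_pos[of n a] in \<open>auto simp: concentrated_point_def\<close>)

lemma spread_point_in_nabla_bar:
  assumes "a 1 \<noteq> 0" and "M \<noteq> 0"
  shows "spread_point n a M \<in> nabla_bar"
proof -
  let ?r = "nonsingletons n a" and ?c = "unit_mass n a" and ?D = "real (a 1) * real M"
  have "1 \<le> a 1 * M"
    using assms by (simp add: Suc_le_eq)
  then have D: "1 \<le> ?D"
    by (metis of_nat_1 of_nat_le_iff of_nat_mult)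
  have c: "0 \<le> ?c / ?D" "?c / ?D \<le> ?c"
    using unit_mass_pos[of n a] D by (auto simp: divide_le_eq)
  show ?thesis
  proof (rule nabla_barI[where R = "?r + a 1 * M"])
    have "sum (spread_point n a M) {..<?r + a 1 * M}
        = sum (spread_point n a M) {..<?r} + sum (spread_point n a M) {?r..<?r + a 1 * M}"
      by (simp add: lessThan_atLeast0 sum.atLeastLessThan_concat)
    also have "\<dots> = real ?r * ?c + real (a 1 * M) * (?c / ?D)"
      by (simp add: spread_point_def)
    also have "real (a 1 * M) * (?c / ?D) = ?c"
      using assms by simp
    also have "real ?r * ?c + ?c = 1"
      by (simp add: unit_mass_def field_simps)
    finally show "sum (spread_point n a M) {..<?r + a 1 * M} \<le> 1"
      by simp
  qed (use c unit_mass_pos[of n a] in \<open>auto simp: spread_point_def\<close>)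
qed

lemma spread_point_tendsto:
  "(\<lambda>M. spread_point n a (Suc M)) \<longlonglongrightarrow> concentrated_point n a"
proof (rule tendsto_fun_componentwise)
  fix k
  have "(\<lambda>M. unit_mass n a / real (a 1) / real (Suc M)) \<longlonglongrightarrow> 0"
    using LIMSEQ_Suc[OF lim_const_over_n[of "unit_mass n a / real (a 1)"]] by simp
  then have "(\<lambda>M. if k < nonsingletons n a + a 1 * Suc M then
      unit_mass n a / (real (a 1) * real (Suc M)) else 0) \<longlonglongrightarrow> 0"
    by (rule Lim_null_comparison[rotated])
       (use unit_mass_pos[of n a] in \<open>auto simp: field_simps intro!: always_eventually\<close>)
  then show "(\<lambda>M. spread_point n a (Suc M) k) \<longlonglongrightarrow> concentrated_point n a k"
    by (simp add: spread_point_def concentrated_point_def)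
qed

lemma card_idx: "1 \<le> n \<Longrightarrow> card (idx n a) = a 1 + nonsingletons n a"
proof -
  assume "1 \<le> n"
  then have "{1..n} = insert 1 {2..<Suc n}"
    by auto
  then show ?thesis
    by (simp add: idx_eq_Sigma block_offset_def)
qed

text \<open>Pigeonhole: a labeling uses \<open>card (idx n a) > r\<close> distinct labels, but only \<open>r\<close> of
  them carry mass.\<close>
lemma F_concentrated_point:
  assumes "1 \<le> n" and "a 1 \<noteq> 0"
  shows "F n a (concentrated_point n a) = 0"
proof -
  let ?I = "idx n a" and ?r = "nonsingletons n a"
  have "label_weight n a (concentrated_point n a) l = 0" if l: "l \<in> labelings n a" for l
  proof -
    have "\<exists>x\<in>?I. ?r \<le> l x"
    proof (rule ccontr)
      assume "\<not> (\<exists>x\<in>?I. ?r \<le> l x)"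
      then have "l ` ?I \<subseteq> {..<?r}"
        by (auto simp: not_le)
      moreover have "inj_on l ?I"
        using l by (simp add: labelings_def)
      ultimately have "card ?I \<le> ?r"
        using card_inj_on_le[of l ?I "{..<?r}"] by simp
      then show False
        using card_idx[OF assms(1)] assms(2) by simp
    qed
    then obtain x where x: "x \<in> ?I" "?r \<le> l x"
      by blast
    then have "concentrated_point n a (l x) ^ fst x = 0"
      using idx_fst_ge_1[OF x(1)] by (simp add: concentrated_point_def)
    then show ?thesis
      unfolding label_weight_def using x(1) by (intro prod_zero) auto
  qed
  then show ?thesis
    by (simp add: F_eq_infsum_label_weight infsum_0)
qed

lemma card_idx_singletons: "1 \<le> n \<Longrightarrow> card (idx n a \<inter> {x. fst x = 1}) = a 1"
proof -
  assume "1 \<le> n"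
  then have "idx n a \<inter> {x. fst x = 1} = {1} \<times> {1..a 1}"
    by (auto simp: idx_def)
  then show ?thesis
    by simp
qed

lemma label_weight_spread_labeling:
  assumes "1 \<le> n" and t: "t \<in> {1..a 1} \<rightarrow>\<^sub>E {..<M}"
  shows "label_weight n a (spread_point n a M) (spread_labeling n a M t)
    = (unit_mass n a / (real (a 1) * real M)) ^ a 1
      * (\<Prod>x\<in>idx n a \<inter> - {x. fst x = 1}. unit_mass n a ^ fst x)"
proof -
  let ?I = "idx n a" and ?r = "nonsingletons n a" and ?c = "unit_mass n a"
  have "spread_point n a M (spread_labeling n a M t x) ^ fst x
      = (if fst x = 1 then ?c / (real (a 1) * real M) else ?c ^ fst x)" if x: "x \<in> ?I" for x
  proof (cases "fst x = 1")
    case True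
    then obtain j where j: "x = (1, j)" "j \<in> {1..a 1}"
      using x by (cases x) (auto simp: idx_def)
    then have "(j - 1) * M + t j < a 1 * M"
      using t mult_add_less_mult_add[of "t j" M "j - 1" "a 1" 0] by (auto simp: PiE_iff)
    then show ?thesis
      using x j spread_labeling_singleton[OF x True, of M t] by (simp add: spread_point_def)
  next
    case False
    then show ?thesis
      using x block_enum_less_nonsingletons[OF x idx_fst_ge_2[OF x False]]
      by (simp add: spread_labeling_nonsingleton spread_point_def)
  qed
  then have "label_weight n a (spread_point n a M) (spread_labeling n a M t)
      = (\<Prod>x\<in>?I. if fst x = 1 then ?c / (real (a 1) * real M) else ?c ^ fst x)"
    unfolding label_weight_def by (rule prod.cong[OF refl])
  also have "\<dots> = (?c / (real (a 1) * real M)) ^ a 1 * (\<Prod>x\<in>?I \<inter> - {x. fst x = 1}. ?c ^ fst x)"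
    using card_idx_singletons[OF assms(1)] by (simp add: prod.If_cases)
  finally show ?thesis .
qed

text \<open>Each of the \<open>M\<^sup>a\<^sup>1\<close> spread labelings has weight of order \<open>M\<^sup>-\<^sup>a\<^sup>1\<close>, so their total
  weight does not depend on \<open>M\<close>.\<close>
lemma F_spread_point_ge:
  assumes "1 \<le> n" and "a 1 \<noteq> 0" and "M \<noteq> 0"
  shows "spread_bound n a \<le> F n a (spread_point n a M)"
proof -
  let ?T = "{1..a 1} \<rightarrow>\<^sub>E {..<M}" and ?c = "unit_mass n a"
    and ?P = "\<Prod>x\<in>idx n a \<inter> - {x. fst x = 1}. unit_mass n a ^ fst x"
    and ?w = "label_weight n a (spread_point n a M)"
  have p: "spread_point n a M \<in> nabla_bar"
    by (rule spread_point_in_nabla_bar[where a = a, OF assms(2,3)])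
  have "real M * (?c / (real (a 1) * real M)) = ?c / real (a 1)"
    using assms(3) by simp
  then have scale: "real M ^ a 1 * (?c / (real (a 1) * real M)) ^ a 1 = (?c / real (a 1)) ^ a 1"
    by (metis power_mult_distrib)
  have "card ?T = M ^ a 1"
    by (simp add: card_PiE)
  then have "(?c / real (a 1)) ^ a 1 * ?P = real (card ?T) * ((?c / (real (a 1) * real M)) ^ a 1 * ?P)"
    by (simp only: of_nat_power mult.assoc[symmetric] scale)
  also have "\<dots> = (\<Sum>t\<in>?T. ?w (spread_labeling n a M t))"
    using label_weight_spread_labeling[OF assms(1)] by simp
  also have "\<dots> = sum ?w (spread_labeling n a M ` ?T)"
    by (rule sum.reindex_cong[OF inj_on_spread_labeling[OF assms(1)] refl refl, symmetric])
  also have "\<dots> \<le> infsum ?w (labelings n a)"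
    using spread_labeling_in_labelings
    by (intro finite_sum_le_infsum label_weight_summable_on[OF p] label_weight_nonneg nabla_bar_nonneg[OF p])
       (auto intro: finite_PiE)
  finally show ?thesis
    unfolding spread_bound_def F_eq_infsum_label_weight mult.assoc
    by (intro mult_left_mono less_imp_le[OF Ccoef_pos])
qed

lemma F_not_continuous_on:
  assumes "1 \<le> n" and "a 1 \<noteq> 0"
  shows "\<not> continuous_on nabla_bar (F n a)"
proof
  assume cont: "continuous_on nabla_bar (F n a)"
  have "\<forall>\<^sub>F M in sequentially. spread_point n a (Suc M) \<in> nabla_bar"
    using spread_point_in_nabla_bar[where a = a and n = n, OF assms(2)] by simp
  from continuous_on_tendsto_compose[OF cont spread_point_tendsto concentrated_point_in_nabla_bar this]
  have lim: "(\<lambda>M. F n a (spread_point n a (Suc M))) \<longlonglongrightarrow> 0"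
    by (simp add: F_concentrated_point[where a = a, OF assms])
  have bound: "spread_bound n a \<le> F n a (spread_point n a (Suc M))" for M
    by (rule F_spread_point_ge[where a = a, OF assms]) simp
  have "spread_bound n a \<le> 0"
    by (rule LIMSEQ_le_const[OF lim]) (use bound in blast)
  with spread_bound_pos[of a n] assms(2) show False
    by simp
qed

theorem lemma3p1:
  fixes n :: nat and a :: "nat \<Rightarrow> nat"
  assumes "n \<ge> 1" and "(\<Sum>i=1..n. i * a i) = n"
  shows "continuous_on nabla_bar (F n a) \<longleftrightarrow> a 1 = 0"
  using F_continuous_on[of a n] F_not_continuous_on[OF assms(1), of a] by blast

end
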